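(* Let $\ell\ge1$. For each integer $\kappa\ge1$ and $u>1$, \[ \frac{d}{du}\widetilde{K}_{\ell}(u,\kappa)=\kappa\, \widetilde{K}_{\ell}(u,\kappa-1)+\sum_{m=0}^{\ell}\sum_{r=0}^{\ell-m}\frac{(-1)^{r}\Gamma(\kappa+1)}{m!\,(\ell-m-r)!}E_{\kappa,m}C_{r,0}\frac{d}{du}\left(\log^{\ell-m-r}u\right). \]
   Context: For integers $\ell\ge1$, $\kappa\ge0$ and $u>1$, define \[ \widetilde{K}_{\ell}(u,\kappa):=\sum_{m=0}^{\ell}\sum_{n=m}^{\kappa}\sum_{r=0}^{\ell-m}\frac{(-1)^{r}\Gamma(\kappa+1)}{m!\,(\ell-m-r)!}E_{n,m}C_{r,\kappa-n}u^{\kappa-n}\log^{\ell-m-r}u, \] where the sum over $n$ is empty if $m>\kappa$; the constants $C_{r,\kappa}$ ($r,\kappa\ge0$) are defined by $\sum_{r\ge0}C_{r,\kappa}z^r=e^{\gamma z}/\Gamma(\kappa+1-z)$ with $\gamma$ Euler's constant; and the constants $E_{n,m}$ ($n,m\ge0$) are defined by $\sum_{n\ge0}E_{n,m}z^n=\left(\int_0^z\frac{1-e^{-t}}{t}\,dt\right)^m$. *)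

theory Defs
  imports "HOL-Analysis.Analysis"
begin

definition Ccoef :: "nat \<Rightarrow> nat \<Rightarrow> real" where
  "Ccoef r k = (deriv ^^ r) (\<lambda>z::real. exp (euler_mascheroni * z) * rGamma (real k + 1 - z)) 0 / fact r"

definition Ein :: "real \<Rightarrow> real" where
  "Ein z = (LBINT t=ereal 0..ereal z. (1 - exp (- t)) / t)"

definition Ecoef :: "nat \<Rightarrow> nat \<Rightarrow> real" where
  "Ecoef n m = (deriv ^^ n) (\<lambda>z. Ein z ^ m) 0 / fact n"

definition Ktilde :: "nat \<Rightarrow> real \<Rightarrow> nat \<Rightarrow> real" where
  "Ktilde l u k = (\<Sum>m=0..l. \<Sum>n=m..k. \<Sum>r=0..l-m.
      (-1)^r * Gamma (real k + 1) / (fact m * fact (l - m - r))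
      * Ecoef n m * Ccoef r (k - n) * u ^ (k - n) * ln u ^ (l - m - r))"

end

theory Submission
  imports Defs "HOL-Complex_Analysis.Complex_Analysis"
begin

text \<open>Differentiating \<open>u^p log^j u\<close> gives \<open>p u^(p-1) log^j u + j u^(p-1) log^(j-1) u\<close>.
  For \<open>p \<ge> 1\<close> the recurrence \<open>C(r,p-1) = p C(r,p) - C(r-1,p)\<close>, which comes from
  \<open>1/\<Gamma>(p-z) = (p-z)/\<Gamma>(p+1-z)\<close>, recombines the two contributions into the term of
  \<open>K(u,\<kappa>-1)\<close> with \<open>p\<close> lowered by one, and \<open>\<Gamma>(\<kappa>+1) = \<kappa> \<Gamma>(\<kappa>)\<close> supplies the factor \<open>\<kappa>\<close>.
  The terms with \<open>n = \<kappa>\<close> give the extra sum; for \<open>m > \<kappa>\<close> they are absent on the left but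
  harmless on the right, since \<open>Ein(0) = 0\<close> makes \<open>Ein^m\<close> vanish to order \<open>m\<close>, so \<open>E(\<kappa>,m) = 0\<close>.
  Both coefficient identities are obtained by extending the generating functions to entire
  functions and applying the Leibniz rule.\<close>

lemma higher_deriv_real_restriction:
  assumes F: "F holomorphic_on UNIV" and real: "\<And>x. F (of_real x) = of_real (f x)"
  shows "(deriv ^^ n) f x = Re ((deriv ^^ n) F (of_real x))"
proof -
  have "(deriv ^^ n) (\<lambda>x. Re (F (of_real x))) = (\<lambda>x. Re ((deriv ^^ n) F (of_real x)))"
  proof (induction n)
    case 0
    show ?case by simp
  next
    case (Suc n)
    have "(deriv ^^ n) F holomorphic_on UNIV"
      using F by (intro holomorphic_higher_deriv) auto
    then have "((deriv ^^ n) F has_field_derivative (deriv ^^ Suc n) F (of_real x)) (at (of_real x))"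
      for x :: real by (simp add: holomorphic_derivI)
    then have "((\<lambda>x. Re ((deriv ^^ n) F (of_real x))) has_real_derivative
                 Re ((deriv ^^ Suc n) F (of_real x))) (at x)" for x
      by (intro has_field_derivative_Re has_vector_derivative_real_field)
    then show ?case
      by (auto simp: Suc DERIV_imp_deriv)
  qed
  moreover have "(\<lambda>x. Re (F (of_real x))) = f"
    by (simp add: real)
  ultimately show ?thesis
    by simp
qed

text \<open>At \<open>r = 0\<close> the truncated \<open>r - 1\<close> is harmless because of the factor \<open>r\<close>.\<close>

lemma higher_deriv_linear_factor:
  assumes "f holomorphic_on UNIV"
  shows "(deriv ^^ r) (\<lambda>w. (c - w) * f w) a
           = (c - a) * (deriv ^^ r) f a - of_nat r * (deriv ^^ (r - 1)) f a"
proof -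
  have lin: "(deriv ^^ i) (\<lambda>w. c - w) a = (if i = 0 then c - a else if i = 1 then -1 else 0)" for i
  proof -
    have "(deriv ^^ i) (\<lambda>w. c - w) a = (deriv ^^ i) (\<lambda>w. c) a - (deriv ^^ i) (\<lambda>w. w) a"
      by (rule higher_deriv_diff[of _ UNIV]) (auto intro: holomorphic_intros)
    then show ?thesis
      by (simp add: higher_deriv_const higher_deriv_ident)
  qed
  have "(deriv ^^ r) (\<lambda>w. (c - w) * f w) a
          = (\<Sum>i=0..r. of_nat (r choose i) * (deriv ^^ i) (\<lambda>w. c - w) a * (deriv ^^ (r - i)) f a)"
    by (rule higher_deriv_mult[of _ UNIV]) (use assms in \<open>auto intro: holomorphic_intros\<close>)
  also have "\<dots> = (\<Sum>i\<in>{0, 1} \<inter> {0..r}. of_nat (r choose i) * (deriv ^^ i) (\<lambda>w. c - w) a * (deriv ^^ (r - i)) f a)"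
    by (rule sum.mono_neutral_right) (auto simp: lin)
  also have "\<dots> = (c - a) * (deriv ^^ r) f a - of_nat r * (deriv ^^ (r - 1)) f a"
    by (cases r) (auto simp: lin algebra_simps)
  finally show ?thesis .
qed

lemma higher_deriv_power_zero_of_zero:
  assumes F: "F holomorphic_on S" "open S" "a \<in> S" "F a = 0" and "n < m"
  shows "(deriv ^^ n) (\<lambda>z. F z ^ m) a = 0"
proof -
  define H where "H z = (if z = a then deriv F a else (F z - F a) / (z - a))" for z
  have H: "H holomorphic_on S"
    unfolding H_def using F by (intro pole_lemma) (auto simp: interior_open)
  have "F z = (z - a) * H z" for z
    using F(4) by (simp add: H_def)
  then have "(deriv ^^ n) (\<lambda>z. F z ^ m) a = (deriv ^^ n) (\<lambda>z. (z - a) ^ m * H z ^ m) a"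
    by (simp add: power_mult_distrib)
  also have "\<dots> = (\<Sum>i=0..n. of_nat (n choose i) * (deriv ^^ i) (\<lambda>z. (z - a) ^ m) a
                              * (deriv ^^ (n - i)) (\<lambda>z. H z ^ m) a)"
    by (rule higher_deriv_mult) (use F H in \<open>auto intro!: holomorphic_intros\<close>)
  also have "\<dots> = 0"
    using \<open>n < m\<close> by (intro sum.neutral) (auto simp: higher_deriv_power)
  finally show ?thesis .
qed

definition Ccoef_fun :: "nat \<Rightarrow> complex \<Rightarrow> complex" where
  "Ccoef_fun k z = exp (of_real euler_mascheroni * z) * rGamma (of_nat k + 1 - z)"

lemma Ccoef_fun_holomorphic: "Ccoef_fun k holomorphic_on UNIV"
  unfolding Ccoef_fun_def by (intro holomorphic_intros)

lemma Ccoef_eq: "Ccoef r k = Re ((deriv ^^ r) (Ccoef_fun k) 0) / fact r"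
proof -
  have "Ccoef_fun k (of_real x) = of_real (exp (euler_mascheroni * x) * rGamma (real k + 1 - x))" for x
    unfolding Ccoef_fun_def of_real_mult exp_of_real[symmetric] rGamma_complex_of_real[symmetric]
    by simp
  then show ?thesis
    unfolding Ccoef_def by (subst higher_deriv_real_restriction[OF Ccoef_fun_holomorphic]) auto
qed

lemma Ccoef_fun_Suc: "Ccoef_fun k z = (of_nat (Suc k) - z) * Ccoef_fun (Suc k) z"
  using rGamma_plus1[of "of_nat (Suc k) - z"] by (simp add: Ccoef_fun_def algebra_simps)

lemma Ccoef_recurrence:
  "Ccoef r k = real (Suc k) * Ccoef r (Suc k) - case_nat 0 (\<lambda>r. Ccoef r (Suc k)) r"
proof -
  have "(deriv ^^ r) (Ccoef_fun k) 0 = (deriv ^^ r) (\<lambda>w. (of_nat (Suc k) - w) * Ccoef_fun (Suc k) w) 0"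
    by (subst Ccoef_fun_Suc[abs_def]) (rule refl)
  also have "\<dots> = of_nat (Suc k) * (deriv ^^ r) (Ccoef_fun (Suc k)) 0
                   - of_nat r * (deriv ^^ (r - 1)) (Ccoef_fun (Suc k)) 0"
    by (simp add: higher_deriv_linear_factor Ccoef_fun_holomorphic)
  finally have re: "Re ((deriv ^^ r) (Ccoef_fun k) 0) = real (Suc k) * Re ((deriv ^^ r) (Ccoef_fun (Suc k)) 0)
                   - real r * Re ((deriv ^^ (r - 1)) (Ccoef_fun (Suc k)) 0)"
    by simp
  show ?thesis
  proof (cases r)
    case (Suc r')
    have "fact (Suc r') = real (Suc r') * fact r'"
      by simp
    with Suc re show ?thesis
      unfolding Ccoef_eq by (simp add: diff_divide_distrib del: of_nat_Suc fact_Suc)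
  qed (use re in \<open>simp add: Ccoef_eq\<close>)
qed

definition Ein_kernel :: "complex \<Rightarrow> complex" where
  "Ein_kernel z = (if z = 0 then 1 else (1 - exp (- z)) / z)"

lemma Ein_kernel_holomorphic: "Ein_kernel holomorphic_on UNIV"
proof -
  let ?f = "\<lambda>z::complex. - exp (- z)"
  have f'0: "deriv ?f 0 = 1"
    by (rule DERIV_imp_deriv) (auto intro!: derivative_eq_intros)
  have "(\<lambda>z. if z = 0 then deriv ?f 0 else (?f z - ?f 0) / (z - 0)) holomorphic_on UNIV"
    by (rule pole_lemma) (auto intro!: holomorphic_intros)
  then show ?thesis
    by (rule holomorphic_transform) (auto simp: Ein_kernel_def f'0)
qed

lemma Ein_kernel_of_real:
  "Ein_kernel (of_real x) = of_real (if x = 0 then 1 else (1 - exp (- x)) / x)"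
  by (simp add: Ein_kernel_def exp_of_real[symmetric])

lemma primitive_Ein_kernel_of_real:
  assumes F: "\<And>z. (F has_field_derivative Ein_kernel z) (at z)" and "F 0 = 0"
  shows "F (of_real x) = of_real (Ein x)"
proof -
  let ?g = "\<lambda>t. Re (Ein_kernel (of_real t))"
  have F_real: "((\<lambda>t. F (of_real t)) has_vector_derivative Ein_kernel (of_real t)) (at t)" for t
    using F by (rule has_vector_derivative_real_field)
  have Im_const: "((\<lambda>t. Im (F (of_real t))) has_real_derivative 0) (at t)" for t
    using has_field_derivative_Im[OF F_real[of t]] by (simp add: Ein_kernel_of_real)
  have "Im (F (of_real x)) = Im (F (of_real 0))"
    by (rule DERIV_isconst_all) (use Im_const in blast)
  then have Im: "Im (F (of_real x)) = 0"
    using \<open>F 0 = 0\<close> by simp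
  have "continuous_on UNIV (\<lambda>t. Ein_kernel (of_real t))"
    by (rule continuous_on_compose2[OF holomorphic_on_imp_continuous_on[OF Ein_kernel_holomorphic]])
       (auto intro: continuous_intros)
  then have cont: "continuous_on UNIV ?g"
    by (intro continuous_intros)
  have "Ein x = (LBINT t=ereal 0..ereal x. ?g t)"
    unfolding Ein_def
  proof (rule interval_integral_cong_AE)
    show "(\<lambda>t::real. (1 - exp (- t)) / t) \<in> borel_measurable borel"
      by measurable
    show "?g \<in> borel_measurable borel"
      using cont by (rule borel_measurable_continuous_onI)
    show "AE t \<in> einterval (min (ereal 0) (ereal x)) (max (ereal 0) (ereal x)) in lborel.
            (1 - exp (- t)) / t = ?g t"
      using AE_lborel_singleton[of 0] by eventually_elim (simp add: Ein_kernel_of_real)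
  qed
  also have "\<dots> = Re (F (of_real x)) - Re (F (of_real 0))"
  proof (rule interval_integral_FTC_finite)
    show "continuous_on {min 0 x..max 0 x} ?g"
      using cont by (rule continuous_on_subset) auto
    show "((\<lambda>t. Re (F (of_real t))) has_vector_derivative ?g t) (at t within {min 0 x..max 0 x})" for t
      using has_field_derivative_Re[OF F_real[of t]]
      by (simp add: has_real_derivative_iff_has_vector_derivative[symmetric] has_field_derivative_at_within)
  qed
  finally have Re: "Re (F (of_real x)) = Ein x"
    using \<open>F 0 = 0\<close> by simp
  show ?thesis
    using Re Im by (simp add: complex_eq_iff)
qed

lemma Ein_entire_extension:
  obtains F where "F holomorphic_on UNIV" "F 0 = 0" "\<And>x. F (of_real x) = of_real (Ein x)"
proof -
  obtain G where G: "\<And>z. (G has_field_derivative Ein_kernel z) (at z)"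
    using holomorphic_convex_primitive'[OF convex_UNIV open_UNIV Ein_kernel_holomorphic] by auto
  define F where "F z = G z - G 0" for z
  have F: "(F has_field_derivative Ein_kernel z) (at z)" for z
    unfolding F_def using G by (auto intro!: derivative_eq_intros)
  have "F holomorphic_on UNIV"
    using F by (auto simp: holomorphic_on_def field_differentiable_def field_differentiable_at_within)
  moreover have "F 0 = 0"
    by (simp add: F_def)
  ultimately show ?thesis
    using that primitive_Ein_kernel_of_real[OF F] by blast
qed

lemma Ecoef_eq_0:
  assumes "n < m"
  shows "Ecoef n m = 0"
proof -
  obtain F where F: "F holomorphic_on UNIV" "F 0 = 0" "\<And>x. F (of_real x) = of_real (Ein x)"
    using Ein_entire_extension by blast
  have "(deriv ^^ n) (\<lambda>z. Ein z ^ m) 0 = Re ((deriv ^^ n) (\<lambda>z. F z ^ m) 0)"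
    using F by (subst higher_deriv_real_restriction[of "\<lambda>z. F z ^ m"]) (auto intro: holomorphic_intros)
  also have "\<dots> = 0"
    using F assms by (simp add: higher_deriv_power_zero_of_zero)
  finally show ?thesis
    by (simp add: Ecoef_def)
qed

definition logpoly :: "nat \<Rightarrow> (nat \<Rightarrow> real) \<Rightarrow> real \<Rightarrow> real" where
  "logpoly N c L = (\<Sum>r=0..N. (-1)^r * c r / fact (N - r) * L ^ (N - r))"

lemma logpoly_diff: "logpoly N (\<lambda>r. a * c r - d r) L = a * logpoly N c L - logpoly N d L"
  by (simp add: logpoly_def sum_distrib_left sum_subtractf[symmetric] algebra_simps diff_divide_distrib)

lemma logpoly_has_real_derivative:
  "(logpoly N c has_real_derivative - logpoly N (case_nat 0 c) L) (at L)"
proof -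
  have "(logpoly N c has_real_derivative
          (\<Sum>r=0..N. (-1)^r * c r / fact (N - r) * (real (N - r) * L ^ (N - r - 1)))) (at L)"
    unfolding logpoly_def[abs_def] by (auto intro!: derivative_eq_intros sum.cong simp: mult_ac)
  also have "(\<Sum>r=0..N. (-1)^r * c r / fact (N - r) * (real (N - r) * L ^ (N - r - 1)))
               = - logpoly N (case_nat 0 c) L"
  proof (cases N)
    case (Suc M)
    have "(\<Sum>r=0..Suc M. (-1)^r * c r / fact (Suc M - r) * (real (Suc M - r) * L ^ (Suc M - r - 1)))
            = (\<Sum>r=0..M. (-1)^r * c r / fact (M - r) * L ^ (M - r))"
    proof -
      have "(-1)^r * c r / fact (Suc M - r) * (real (Suc M - r) * L ^ (Suc M - r - 1))
              = (-1)^r * c r / fact (M - r) * L ^ (M - r)" if "r \<le> M" for r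
      proof -
        have "Suc M - r = Suc (M - r)"
          using that by simp
        then show ?thesis
          by (simp add: field_simps del: of_nat_Suc)
      qed
      then show ?thesis
        by (simp add: sum.atLeast0_atMost_Suc del: sum.atLeast0_atMost_Suc_shift)
    qed
    also have "\<dots> = - logpoly (Suc M) (case_nat 0 c) L"
      unfolding logpoly_def sum.atLeast0_atMost_Suc_shift by (simp add: sum_negf)
    finally show ?thesis
      using Suc by simp
  qed (simp add: logpoly_def)
  finally show ?thesis .
qed

lemma power_logpoly_Ccoef_has_real_derivative:
  assumes "v > 0"
  shows "((\<lambda>v. v ^ Suc p * logpoly N (\<lambda>r. Ccoef r (Suc p)) (ln v)) has_real_derivative
           v ^ p * logpoly N (\<lambda>r. Ccoef r p) (ln v)) (at v)"
proof -
  let ?c = "\<lambda>r. Ccoef r (Suc p)"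
  have log: "((\<lambda>v. logpoly N ?c (ln v)) has_real_derivative
               - logpoly N (case_nat 0 ?c) (ln v) * inverse v) (at v)"
    by (rule DERIV_chain2[OF logpoly_has_real_derivative DERIV_ln[OF assms]])
  have "((\<lambda>v. v ^ Suc p * logpoly N ?c (ln v)) has_real_derivative
          v ^ Suc p * (- logpoly N (case_nat 0 ?c) (ln v) * inverse v)
          + real (Suc p) * v ^ (Suc p - Suc 0) * logpoly N ?c (ln v)) (at v)"
    by (rule DERIV_mult'[OF DERIV_pow log])
  moreover have "v ^ Suc p * (- logpoly N (case_nat 0 ?c) (ln v) * inverse v)
          + real (Suc p) * v ^ (Suc p - Suc 0) * logpoly N ?c (ln v)
        = v ^ p * logpoly N (\<lambda>r. real (Suc p) * ?c r - case_nat 0 ?c r) (ln v)"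
    unfolding logpoly_diff using assms by (simp add: field_simps)
  moreover have "(\<lambda>r. real (Suc p) * ?c r - case_nat 0 ?c r) = (\<lambda>r. Ccoef r p)"
    using Ccoef_recurrence[of _ p] by simp
  ultimately show ?thesis
    by simp
qed

lemma logpoly_ln_has_real_derivative:
  assumes "u > 0"
  shows "((\<lambda>v. logpoly N c (ln v)) has_real_derivative
           (\<Sum>r=0..N. (-1)^r * c r / fact (N - r) * deriv (\<lambda>v. ln v ^ (N - r)) u)) (at u)"
proof -
  have "((\<lambda>v. ln v ^ j) has_real_derivative real j * ln u ^ (j - 1) * inverse u) (at u)" for j
    using assms by (auto intro!: derivative_eq_intros simp: divide_inverse)
  then have "((\<lambda>v. ln v ^ j) has_real_derivative deriv (\<lambda>v. ln v ^ j) u) (at u)" for j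
    by (metis DERIV_imp_deriv)
  then show ?thesis
    unfolding logpoly_def by (intro DERIV_sum DERIV_cmult)
qed

lemma Ktilde_eq_logpoly:
  "Ktilde l u k = Gamma (real k + 1) *
     (\<Sum>m=0..l. (\<Sum>n=m..k. Ecoef n m * (u ^ (k - n) * logpoly (l - m) (\<lambda>r. Ccoef r (k - n)) (ln u)))
                / fact m)"
  unfolding Ktilde_def logpoly_def
  by (simp add: sum_distrib_left sum_divide_distrib algebra_simps)

lemma sum_Ecoef_logpoly_has_real_derivative:
  assumes "u > 0" and "k \<ge> 1"
  shows "((\<lambda>v. \<Sum>n=m..k. Ecoef n m * (v ^ (k - n) * logpoly N (\<lambda>r. Ccoef r (k - n)) (ln v)))
          has_real_derivative
            (\<Sum>n=m..k - 1. Ecoef n m * (u ^ (k - 1 - n) * logpoly N (\<lambda>r. Ccoef r (k - 1 - n)) (ln u)))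
            + Ecoef k m * (\<Sum>r=0..N. (-1)^r * Ccoef r 0 / fact (N - r) * deriv (\<lambda>v. ln v ^ (N - r)) u))
         (at u)"
proof (cases "m \<le> k")
  case True
  obtain k' where k: "k = Suc k'"
    using \<open>k \<ge> 1\<close> by (cases k) auto
  have "((\<lambda>v. v ^ (k - n) * logpoly N (\<lambda>r. Ccoef r (k - n)) (ln v)) has_real_derivative
          u ^ (k' - n) * logpoly N (\<lambda>r. Ccoef r (k' - n)) (ln u)) (at u)" if "n \<le> k'" for n
    using power_logpoly_Ccoef_has_real_derivative[OF \<open>u > 0\<close>, of "k' - n" N] that k
    by (simp add: Suc_diff_le)
  then have "((\<lambda>v. \<Sum>n=m..k'. Ecoef n m * (v ^ (k - n) * logpoly N (\<lambda>r. Ccoef r (k - n)) (ln v)))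
          has_real_derivative
            (\<Sum>n=m..k'. Ecoef n m * (u ^ (k' - n) * logpoly N (\<lambda>r. Ccoef r (k' - n)) (ln u)))) (at u)"
    by (intro DERIV_sum DERIV_cmult) simp
  moreover have "((\<lambda>v. Ecoef k m * (v ^ (k - k) * logpoly N (\<lambda>r. Ccoef r (k - k)) (ln v)))
          has_real_derivative
            Ecoef k m * (\<Sum>r=0..N. (-1)^r * Ccoef r 0 / fact (N - r) * deriv (\<lambda>v. ln v ^ (N - r)) u))
          (at u)"
    using logpoly_ln_has_real_derivative[OF \<open>u > 0\<close>] by (intro DERIV_cmult) simp
  ultimately show ?thesis
    using True by (simp add: k sum.cl_ivl_Suc del: of_nat_Suc) (rule DERIV_add)
next
  case False
  then show ?thesis
    by (simp add: Ecoef_eq_0)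
qed

theorem lemma3:
  fixes l k :: nat and u :: real
  assumes "l \<ge> 1" and "k \<ge> 1" and "u > 1"
  shows "((\<lambda>v. Ktilde l v k) has_real_derivative
           (real k * Ktilde l u (k - 1)
            + (\<Sum>m=0..l. \<Sum>r=0..l-m.
                (-1)^r * Gamma (real k + 1) / (fact m * fact (l - m - r))
                * Ecoef k m * Ccoef r 0 * deriv (\<lambda>v. ln v ^ (l - m - r)) u))) (at u)"
proof -
  define A where "A m = (\<Sum>n=m..k - 1. Ecoef n m * (u ^ (k - 1 - n)
                          * logpoly (l - m) (\<lambda>r. Ccoef r (k - 1 - n)) (ln u)))" for m
  define D where "D m = (\<Sum>r=0..l - m. (-1)^r * Ccoef r 0 / fact (l - m - r)
                          * deriv (\<lambda>v. ln v ^ (l - m - r)) u)" for m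
  have "((\<lambda>v. Ktilde l v k) has_real_derivative
          Gamma (real k + 1) * (\<Sum>m=0..l. (A m + Ecoef k m * D m) / fact m)) (at u)"
    unfolding Ktilde_eq_logpoly[abs_def] A_def D_def using assms
    by (intro DERIV_cmult DERIV_sum DERIV_cdivide sum_Ecoef_logpoly_has_real_derivative) auto
  moreover have "real k * Gamma (real (k - 1) + 1) = Gamma (real k + 1)"
    using \<open>k \<ge> 1\<close> Gamma_plus1[of "real k"] by (simp add: of_nat_diff of_nat_in_nonpos_Ints_iff)
  then have "real k * Ktilde l u (k - 1) = Gamma (real k + 1) * (\<Sum>m=0..l. A m / fact m)"
    by (simp add: Ktilde_eq_logpoly A_def)
  moreover have "(\<Sum>m=0..l. \<Sum>r=0..l-m.
                  (-1)^r * Gamma (real k + 1) / (fact m * fact (l - m - r))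
                  * Ecoef k m * Ccoef r 0 * deriv (\<lambda>v. ln v ^ (l - m - r)) u)
               = Gamma (real k + 1) * (\<Sum>m=0..l. Ecoef k m * D m / fact m)"
    by (simp add: D_def sum_distrib_left sum_divide_distrib algebra_simps)
  ultimately show ?thesis
    by (simp add: add_divide_distrib sum.distrib distrib_left)
qed

end
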